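(* Fix $n\ge1$ and let $\mathcal A_n=\{(a_1,\dots,a_n):a_k\in\mathbb Z_{\ge0},\ \sum_{i=1}^n i a_i=n\}$. For $\theta>0$ let $\mathbf A_n$ be an $\mathcal A_n$-valued random variable with the Ewens sampling formula distribution $$P\{\mathbf A_n=(a_1,\dots,a_n)\}=\frac{n!}{\theta_{(n)}}\prod_{j=1}^n\Big(\frac\theta j\Big)^{a_j}\frac1{a_j!},\qquad \theta_{(n)}=\theta(\theta+1)\cdots(\theta+n-1).$$ Then, as $\theta\to\infty$, the family of laws of $\mathbf A_n$ satisfies an LDP on $\mathcal A_n$ with speed $\log\theta$ and rate function $$I_{\mathrm{esf}}(\mathbf a)=n-\sum_{i=1}^n a_i.$$
   Context: $\mathbf A_n$ records, for a random sample of size $n$ from a population distributed as $PD(\theta)$, the numbers $A_k$ of alleles appearing exactly $k$ times. An LDP with speed $\log\theta$ uses normalization $(\log\theta)^{-1}\log$ as $\theta\to\infty$. *)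

theory Defs
  imports "HOL-Analysis.Analysis"
begin

definition elog :: "real \<Rightarrow> ereal" where
  "elog p = (if p \<le> 0 then -\<infinity> else ereal (ln p))"

definition rate_function :: "'a topology \<Rightarrow> ('a \<Rightarrow> ereal) \<Rightarrow> bool" where
  "rate_function X I \<longleftrightarrow>
     (\<forall>x\<in>topspace X. I x \<ge> 0) \<and>
     (\<forall>c::real. closedin X {x\<in>topspace X. I x \<le> ereal c})"

text \<open>Large deviation principle, as the parameter tends to infinity, for a family
  of laws P t (set functions on the measurable = all subsets of the space),
  with speed v and rate function I.\<close>
definition LDP :: "'a topology \<Rightarrow> (real \<Rightarrow> 'a set \<Rightarrow> real) \<Rightarrow> (real \<Rightarrow> real)
                    \<Rightarrow> ('a \<Rightarrow> ereal) \<Rightarrow> bool" where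
  "LDP X P v I \<longleftrightarrow>
     filterlim v at_top at_top \<and>
     rate_function X I \<and>
     (\<forall>F. closedin X F \<longrightarrow>
        Limsup at_top (\<lambda>t. elog (P t F) / ereal (v t)) \<le> - (INF x\<in>F. I x)) \<and>
     (\<forall>G. openin X G \<longrightarrow>
        Liminf at_top (\<lambda>t. elog (P t G) / ereal (v t)) \<ge> - (INF x\<in>G. I x))"

text \<open>The state space A_n: a list a of length n encodes (a_1,...,a_n) with a_j = a!(j-1).\<close>
definition esf_space :: "nat \<Rightarrow> nat list set" where
  "esf_space n = {a. length a = n \<and> (\<Sum>i=1..n. i * a ! (i - 1)) = n}"

definition esf_prob :: "real \<Rightarrow> nat \<Rightarrow> nat list \<Rightarrow> real" where
  "esf_prob \<theta> n a = fact n / pochhammer \<theta> n *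
     (\<Prod>j=1..n. (\<theta> / real j) ^ (a ! (j - 1)) / fact (a ! (j - 1)))"

definition esf_law :: "nat \<Rightarrow> real \<Rightarrow> nat list set \<Rightarrow> real" where
  "esf_law n \<theta> S = (\<Sum>a\<in>S \<inter> esf_space n. esf_prob \<theta> n a)"

definition I_esf :: "nat \<Rightarrow> nat list \<Rightarrow> ereal" where
  "I_esf n a = ereal (real n - (\<Sum>i=1..n. real (a ! (i - 1))))"

end

theory Submission
  imports Defs "HOL-Real_Asymp.Real_Asymp"
begin

text \<open>
  With k(a) = a_1 + ... + a_n the number of alleles, the Ewens probability of a is
  c(a) n! theta^k(a) / theta_(n), where c(a) > 0 does not depend on theta, and theta_(n) ~ theta^n.
  As the state space is finite, the probability of a nonempty set S is of exact order
  theta^(m - n) with m the largest k(a) on S, so log P(S) / log theta converges to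
  -inf_S I_esf. On the discrete topology this limit yields both LDP bounds at once.
\<close>

definition esf_alleles :: "nat \<Rightarrow> nat list \<Rightarrow> nat" where
  "esf_alleles n a = (\<Sum>i=1..n. a ! (i - 1))"

definition esf_weight :: "nat \<Rightarrow> nat list \<Rightarrow> real" where
  "esf_weight n a = (\<Prod>j=1..n. (1 / real j) ^ (a ! (j - 1)) / fact (a ! (j - 1)))"

lemma esf_weight_pos: "esf_weight n a > 0"
  unfolding esf_weight_def by (intro prod_pos) auto

lemma esf_prob_eq_power:
  "esf_prob \<theta> n a = fact n / pochhammer \<theta> n * (esf_weight n a * \<theta> ^ esf_alleles n a)"
proof -
  have "(\<Prod>j=1..n. (\<theta> / real j) ^ (a ! (j - 1)) / fact (a ! (j - 1)))
      = (\<Prod>j=1..n. \<theta> ^ (a ! (j - 1)) * ((1 / real j) ^ (a ! (j - 1)) / fact (a ! (j - 1))))"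
    by (intro prod.cong refl) (simp add: power_divide)
  also have "\<dots> = esf_weight n a * \<theta> ^ esf_alleles n a"
    unfolding prod.distrib esf_alleles_def esf_weight_def power_sum by simp
  finally show ?thesis by (simp add: esf_prob_def)
qed

lemma esf_alleles_le:
  assumes "a \<in> esf_space n"
  shows "esf_alleles n a \<le> n"
proof -
  have "esf_alleles n a \<le> (\<Sum>i=1..n. i * a ! (i - 1))"
    unfolding esf_alleles_def by (intro sum_mono) auto
  with assms show ?thesis by (simp add: esf_space_def)
qed

lemma I_esf_eq: "I_esf n a = ereal (real n - real (esf_alleles n a))"
  by (simp add: I_esf_def esf_alleles_def)

lemma finite_esf_space: "finite (esf_space n)"
proof -
  have "esf_space n \<subseteq> {xs. set xs \<subseteq> {..n} \<and> length xs = n}"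
  proof safe
    fix a assume a: "a \<in> esf_space n"
    then show len: "length a = n" by (simp add: esf_space_def)
    fix x assume "x \<in> set a"
    then obtain j where j: "j < n" "a ! j = x" using len by (auto simp: in_set_conv_nth)
    have "Suc j * a ! (Suc j - 1) \<le> (\<Sum>i=1..n. i * a ! (i - 1))"
      by (rule member_le_sum) (use j in auto)
    with a j have "Suc j * x \<le> n" by (simp add: esf_space_def)
    then show "x \<le> n" by (metis le_trans mult_Suc le_add1)
  qed
  then show ?thesis by (rule finite_subset) (rule finite_lists_length_eq, simp)
qed

lemma ln_over_ln_tendsto_of_powr_ratio:
  fixes f :: "real \<Rightarrow> real"
  assumes lim: "((\<lambda>t. f t / t powr r) \<longlongrightarrow> L) at_top" and "L > 0"
  shows "((\<lambda>t. ln (f t) / ln t) \<longlongrightarrow> r) at_top"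
proof -
  have "((\<lambda>t. ln (f t / t powr r) / ln t) \<longlongrightarrow> 0) at_top"
    using tendsto_ln[OF lim] \<open>L > 0\<close>
    by (intro tendsto_divide_0[OF _ filterlim_at_top_imp_at_infinity[OF ln_at_top]]) auto
  then have "((\<lambda>t. r + ln (f t / t powr r) / ln t) \<longlongrightarrow> r) at_top"
    using tendsto_add[OF tendsto_const] by fastforce
  moreover have "\<forall>\<^sub>F t in at_top. r + ln (f t / t powr r) / ln t = ln (f t) / ln t"
    using eventually_gt_at_top[of 1] order_tendstoD(1)[OF lim \<open>L > 0\<close>]
  proof eventually_elim
    case (elim t)
    then have "f t > 0" by (simp add: zero_less_divide_iff)
    with elim have "ln (f t / t powr r) = ln (f t) - r * ln t"
      by (simp add: ln_div ln_powr)
    with elim show ?case by (simp add: field_simps)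
  qed
  ultimately show ?thesis by (rule Lim_transform_eventually)
qed

lemma power_over_pochhammer_tendsto: "((\<lambda>t. t ^ n / pochhammer t n) \<longlongrightarrow> (1::real)) at_top"
proof -
  have "((\<lambda>t. \<Prod>i<n. t / (t + real i)) \<longlongrightarrow> (\<Prod>i<n. 1::real)) at_top"
    by (intro tendsto_prod) real_asymp
  moreover have "(\<Prod>i<n. t / (t + real i)) = t ^ n / pochhammer t n" for t :: real
    by (simp add: pochhammer_prod atLeast0LessThan prod_dividef)
  ultimately show ?thesis by simp
qed

lemma sum_powers_over_max_power_tendsto:
  fixes c :: "'a \<Rightarrow> real" and k :: "'a \<Rightarrow> nat"
  assumes "finite S"
  defines "m \<equiv> Max (k ` S)"
  shows "((\<lambda>t. (\<Sum>a\<in>S. c a * t ^ k a) / t ^ m) \<longlongrightarrow> (\<Sum>a\<in>{a\<in>S. k a = m}. c a)) at_top"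
proof -
  have "((\<lambda>t. \<Sum>a\<in>S. c a * t powr (real (k a) - real m))
          \<longlongrightarrow> (\<Sum>a\<in>S. c a * (if k a = m then 1 else 0))) at_top"
  proof (intro tendsto_sum tendsto_mult tendsto_const)
    fix a assume "a \<in> S"
    then have "k a \<le> m" using assms by simp
    show "((\<lambda>t. t powr (real (k a) - real m)) \<longlongrightarrow> (if k a = m then 1 else 0)) at_top"
    proof (cases "k a = m")
      case True
      have "\<forall>\<^sub>F t in at_top. (t::real) powr (real (k a) - real m) = 1"
        using eventually_gt_at_top[of 0] by eventually_elim (simp add: True)
      with True show ?thesis by (simp add: tendsto_eventually)
    next
      case False
      with \<open>k a \<le> m\<close> have "real (k a) - real m < 0" by simp
      from tendsto_neg_powr[OF this filterlim_ident] False show ?thesis by simp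
    qed
  qed
  moreover have "\<forall>\<^sub>F t in at_top. (\<Sum>a\<in>S. c a * t powr (real (k a) - real m))
                   = (\<Sum>a\<in>S. c a * t ^ k a) / t ^ m"
    using eventually_gt_at_top[of 0]
  proof eventually_elim
    case (elim t)
    then have "t powr (real (k a) - real m) = t ^ k a / t ^ m" for a
      by (simp add: powr_diff powr_realpow)
    then show ?case by (simp add: sum_divide_distrib)
  qed
  moreover have "(\<Sum>a\<in>S. c a * (if k a = m then 1 else 0)) = (\<Sum>a\<in>{a\<in>S. k a = m}. c a)"
    unfolding sum.inter_filter[OF \<open>finite S\<close>] by (intro sum.cong) auto
  ultimately show ?thesis by (simp add: tendsto_cong)
qed

lemma esf_law_eq:
  assumes "S \<subseteq> esf_space n"
  shows "esf_law n \<theta> S = fact n / pochhammer \<theta> n * (\<Sum>a\<in>S. esf_weight n a * \<theta> ^ esf_alleles n a)"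
  using assms
  by (simp add: esf_law_def esf_prob_eq_power Int_absorb2 sum_distrib_left)

lemma ln_esf_law_over_ln_tendsto:
  assumes "S \<subseteq> esf_space n" "S \<noteq> {}"
  defines "m \<equiv> Max (esf_alleles n ` S)"
  shows "((\<lambda>\<theta>. ln (esf_law n \<theta> S) / ln \<theta>) \<longlongrightarrow> real m - real n) at_top"
proof (rule ln_over_ln_tendsto_of_powr_ratio)
  have "finite S" using assms(1) finite_esf_space by (rule finite_subset)
  define W where "W = (\<Sum>a\<in>{a\<in>S. esf_alleles n a = m}. esf_weight n a)"
  have "W > 0"
  proof -
    have "m \<in> esf_alleles n ` S" using \<open>finite S\<close> assms(2) unfolding m_def by simp
    then obtain a where "a \<in> S" "esf_alleles n a = m" by auto
    then show ?thesis
      unfolding W_def using \<open>finite S\<close>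
      by (intro sum_pos2[of _ a]) (auto intro: less_imp_le esf_weight_pos)
  qed
  then show "fact n * 1 * W > (0::real)" by simp
  have "((\<lambda>\<theta>. fact n * (\<theta> ^ n / pochhammer \<theta> n)
           * ((\<Sum>a\<in>S. esf_weight n a * \<theta> ^ esf_alleles n a) / \<theta> ^ m)) \<longlongrightarrow> fact n * 1 * W) at_top"
    unfolding W_def m_def
    by (intro tendsto_mult tendsto_const power_over_pochhammer_tendsto
          sum_powers_over_max_power_tendsto \<open>finite S\<close>)
  moreover have "\<forall>\<^sub>F \<theta> in at_top. fact n * (\<theta> ^ n / pochhammer \<theta> n)
           * ((\<Sum>a\<in>S. esf_weight n a * \<theta> ^ esf_alleles n a) / \<theta> ^ m)
         = esf_law n \<theta> S / \<theta> powr (real m - real n)"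
    using eventually_gt_at_top[of 0]
    by eventually_elim (simp add: esf_law_eq[OF assms(1)] powr_diff powr_realpow)
  ultimately show "((\<lambda>\<theta>. esf_law n \<theta> S / \<theta> powr (real m - real n)) \<longlongrightarrow> fact n * 1 * W) at_top"
    by (rule Lim_transform_eventually)
qed

lemma INF_I_esf:
  assumes "finite S" "S \<noteq> {}"
  shows "(INF a\<in>S. I_esf n a) = ereal (real n - real (Max (esf_alleles n ` S)))"
proof (rule antisym)
  have "Max (esf_alleles n ` S) \<in> esf_alleles n ` S" using assms by simp
  then obtain a where "a \<in> S" "esf_alleles n a = Max (esf_alleles n ` S)" by auto
  then show "(INF a\<in>S. I_esf n a) \<le> ereal (real n - real (Max (esf_alleles n ` S)))"
    using INF_lower[of a S "I_esf n"] by (simp add: I_esf_eq)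
  show "ereal (real n - real (Max (esf_alleles n ` S))) \<le> (INF a\<in>S. I_esf n a)"
    using assms by (intro INF_greatest) (simp add: I_esf_eq)
qed

lemma elog_esf_law_over_ln_tendsto:
  assumes "S \<subseteq> esf_space n"
  shows "((\<lambda>\<theta>. elog (esf_law n \<theta> S) / ereal (ln \<theta>)) \<longlongrightarrow> - (INF a\<in>S. I_esf n a)) at_top"
proof (cases "S = {}")
  case True
  have "\<forall>\<^sub>F \<theta> in at_top. elog (esf_law n \<theta> S) / ereal (ln \<theta>) = - \<infinity>"
    using eventually_gt_at_top[of 1]
    by eventually_elim (simp add: True esf_law_def elog_def)
  with True show ?thesis by (simp add: tendsto_eventually top_ereal_def)
next
  case False
  have "finite S" using assms finite_esf_space by (rule finite_subset)
  have "((\<lambda>\<theta>. ereal (ln (esf_law n \<theta> S) / ln \<theta>))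
          \<longlongrightarrow> ereal (real (Max (esf_alleles n ` S)) - real n)) at_top"
    by (intro tendsto_ereal ln_esf_law_over_ln_tendsto assms False)
  moreover have "\<forall>\<^sub>F \<theta> in at_top. ereal (ln (esf_law n \<theta> S) / ln \<theta>) = elog (esf_law n \<theta> S) / ereal (ln \<theta>)"
    using eventually_gt_at_top[of 1]
  proof eventually_elim
    case (elim \<theta>)
    have "esf_law n \<theta> S > 0"
      unfolding esf_law_eq[OF assms] using elim \<open>finite S\<close> False
      by (intro mult_pos_pos divide_pos_pos pochhammer_pos sum_pos) (auto intro: esf_weight_pos)
    with elim show ?case by (simp add: elog_def)
  qed
  ultimately have "((\<lambda>\<theta>. elog (esf_law n \<theta> S) / ereal (ln \<theta>))
                     \<longlongrightarrow> ereal (real (Max (esf_alleles n ` S)) - real n)) at_top"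
    by (rule Lim_transform_eventually)
  then show ?thesis using INF_I_esf[OF \<open>finite S\<close> False] by simp
qed

theorem theorem3p3:
  fixes n :: nat
  assumes "n \<ge> 1"
  shows "LDP (discrete_topology (esf_space n)) (esf_law n) (\<lambda>\<theta>. ln \<theta>) (I_esf n)"
  unfolding LDP_def
proof (intro conjI allI impI)
  show "filterlim (\<lambda>\<theta>. ln \<theta>) at_top (at_top :: real filter)" by (rule ln_at_top)
  show "rate_function (discrete_topology (esf_space n)) (I_esf n)"
    unfolding rate_function_def by (auto simp: I_esf_eq dest!: esf_alleles_le)
next
  fix F assume "closedin (discrete_topology (esf_space n)) F"
  then have "F \<subseteq> esf_space n" by simp
  from lim_imp_Limsup[OF trivial_limit_at_top_linorder elog_esf_law_over_ln_tendsto[OF this]]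
  show "Limsup at_top (\<lambda>\<theta>. elog (esf_law n \<theta> F) / ereal (ln \<theta>)) \<le> - (INF a\<in>F. I_esf n a)"
    by simp
next
  fix G assume "openin (discrete_topology (esf_space n)) G"
  then have "G \<subseteq> esf_space n" by simp
  from lim_imp_Liminf[OF trivial_limit_at_top_linorder elog_esf_law_over_ln_tendsto[OF this]]
  show "Liminf at_top (\<lambda>\<theta>. elog (esf_law n \<theta> G) / ereal (ln \<theta>)) \<ge> - (INF a\<in>G. I_esf n a)"
    by simp
qed

end
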